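(* Let $X$ be a real $n\times p$ matrix ($p<n$) of full rank with rows $x_1^\top,\dots,x_n^\top$, let $y\in\mathbb{R}^n$, $\sigma>0$, and $$\psi(g,b)=\sigma\|y-Xg-b\|_1+\tfrac12\|b\|_2^2,\qquad (g,b)\in\mathbb{R}^p\times\mathbb{R}^n.$$ Then: (i) $(\hat g,\hat b)$ minimizes $\psi$ if and only if $X^\top\hat b=0$ and, for every $i\in\{1,\dots,n\}$, $$\hat b_i=\begin{cases}\sigma,&\text{if } y_i-x_i^\top\hat g>\sigma,\\ y_i-x_i^\top\hat g,&\text{if } y_i-x_i^\top\hat g\in[-\sigma,\sigma],\\ -\sigma,&\text{if } y_i-x_i^\top\hat g<-\sigma;\end{cases}$$ in particular $\|\hat b\|_\infty\leq\sigma$ for any minimizer. (ii) The Lagrangian dual of the problem $\min\psi$ is $\gamma:=\max_{u\in\sigma P^*}\big(u^\top y-\tfrac12\|u\|_2^2\big)$, where $P^*=\{u\in\ker X^\top : \|u\|_\infty\leq 1\}$, and $\min_{(g,b)\in\mathbb{R}^p\times\mathbb{R}^n}\psi(g,b)=\gamma$. *)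

theory Defs
  imports "HOL-Analysis.Analysis"
begin

text \<open>Vectors in R^n are modelled as real^'n for a finite index type 'n;
  an n x p matrix is real^'p^'n (rows indexed by 'n).\<close>

definition l1_norm :: "real^'n \<Rightarrow> real" where
  "l1_norm v = (\<Sum>i\<in>UNIV. \<bar>v $ i\<bar>)"

definition linf_norm :: "real^'n \<Rightarrow> real" where
  "linf_norm v = Max (range (\<lambda>i. \<bar>v $ i\<bar>))"

definition psi :: "real \<Rightarrow> real^'p^'n \<Rightarrow> real^'n \<Rightarrow> real^'p \<Rightarrow> real^'n \<Rightarrow> real" where
  "psi \<sigma> X y g b = \<sigma> * l1_norm (y - X *v g - b) + 1/2 * (norm b)^2"

definition Pstar :: "real^'p^'n \<Rightarrow> (real^'n) set" where
  "Pstar X = {u. transpose X *v u = 0 \<and> linf_norm u \<le> 1}"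

definition dual_obj :: "real^'n \<Rightarrow> real^'n \<Rightarrow> real" where
  "dual_obj y u = u \<bullet> y - 1/2 * (norm u)^2"

text \<open>Lagrangian of the equivalent constrained problem
  min sigma ||r||_1 + 1/2 ||b||_2^2  s.t.  r = y - X g - b,
  with multiplier u for the equality constraint.\<close>
definition lagrangian :: "real \<Rightarrow> real^'p^'n \<Rightarrow> real^'n \<Rightarrow> real^'p \<Rightarrow> real^'n \<Rightarrow> real^'n \<Rightarrow> real^'n \<Rightarrow> real" where
  "lagrangian \<sigma> X y g b r u = \<sigma> * l1_norm r + 1/2 * (norm b)^2 + u \<bullet> (y - X *v g - b - r)"

definition lagrange_dual :: "real \<Rightarrow> real^'p^'n \<Rightarrow> real^'n \<Rightarrow> real^'n \<Rightarrow> ereal" where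
  "lagrange_dual \<sigma> X y u = (INF gbr \<in> UNIV. ereal (case gbr of (g, b, r) \<Rightarrow> lagrangian \<sigma> X y g b r u))"

end

theory Submission
  imports Defs
begin

text \<open>Writing \<open>r = y - X g\<close>, the objective splits into the scalar terms
  \<open>\<sigma> \<bar>r\<^sub>i - b\<^sub>i\<bar> + b\<^sub>i\<^sup>2/2\<close>, each minimised in \<open>b\<^sub>i\<close> by clipping \<open>r\<^sub>i\<close> to \<open>[-\<sigma>, \<sigma>]\<close>, with a quadratic
  growth margin. For \<open>\<bar>v\<^sub>i\<bar> \<le> \<sigma>\<close> the same scalar terms dominate \<open>v\<^sub>i r\<^sub>i - v\<^sub>i\<^sup>2/2\<close>, which for
  \<open>X\<^sup>T v = 0\<close> sums to the dual objective independently of \<open>g\<close>; this is weak duality, and it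
  is tight exactly at \<open>v = b = clip r\<close>. A minimiser has \<open>b = clip r\<close> by the growth margin and
  \<open>X\<^sup>T b = 0\<close> because moving along \<open>(g + t w, b - t X w)\<close> leaves the residual unchanged, so
  \<open>b\<close> must be orthogonal to the range of \<open>X\<close>. Since \<open>X\<close> is injective the reduced objective is
  coercive in \<open>g\<close>, so a minimiser exists and strong duality follows.\<close>

definition clip :: "real \<Rightarrow> real \<Rightarrow> real" where
  "clip s r = (if r > s then s else if r < - s then - s else r)"

definition clip_vec :: "real \<Rightarrow> real^'n \<Rightarrow> real^'n" where
  "clip_vec s r = (\<chi> i. clip s (r $ i))"

lemma clip_eq_max_min: "s \<ge> 0 \<Longrightarrow> clip s r = max (- s) (min s r)"
  by (auto simp: clip_def)

lemma abs_clip_le: "s \<ge> 0 \<Longrightarrow> \<bar>clip s r\<bar> \<le> s"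
  by (auto simp: clip_def)

lemma clip_cases:
  assumes "s \<ge> 0"
  obtains "r > s" "clip s r = s" | "r < - s" "clip s r = - s" | "\<bar>r\<bar> \<le> s" "clip s r = r"
  using assms by (cases "r > s"; cases "r < - s") (auto simp: clip_def)

lemma mult_le_bound_mult_abs:
  fixes a s x :: real
  assumes "\<bar>a\<bar> \<le> s"
  shows "a * x \<le> s * \<bar>x\<bar>"
proof -
  have "a * x \<le> \<bar>a\<bar> * \<bar>x\<bar>"
    by (simp add: abs_mult[symmetric])
  also have "\<dots> \<le> s * \<bar>x\<bar>"
    using assms by (rule mult_right_mono) simp
  finally show ?thesis .
qed

lemma clip_minimises_huber_term:
  fixes s r b :: real
  assumes "s \<ge> 0"
  shows "s * \<bar>r - clip s r\<bar> + (clip s r)\<^sup>2 / 2 + (b - clip s r)\<^sup>2 / 2 \<le> s * \<bar>r - b\<bar> + b\<^sup>2 / 2"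
  using assms
proof (cases rule: clip_cases[of s r])
  case 1
  then have "s * \<bar>r - clip s r\<bar> + (clip s r)\<^sup>2 / 2 + (b - clip s r)\<^sup>2 / 2 = s * (r - b) + b\<^sup>2 / 2"
    by (simp add: power2_eq_square field_simps)
  moreover have "s * (r - b) \<le> s * \<bar>r - b\<bar>"
    using assms by (intro mult_le_bound_mult_abs) simp
  ultimately show ?thesis by linarith
next
  case 2
  then have "s * \<bar>r - clip s r\<bar> + (clip s r)\<^sup>2 / 2 + (b - clip s r)\<^sup>2 / 2 = - s * (r - b) + b\<^sup>2 / 2"
    by (simp add: power2_eq_square field_simps)
  moreover have "- s * (r - b) \<le> s * \<bar>r - b\<bar>"
    using assms by (intro mult_le_bound_mult_abs) simp
  ultimately show ?thesis by linarith
next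
  case 3
  then have "s * \<bar>r - clip s r\<bar> + (clip s r)\<^sup>2 / 2 + (b - clip s r)\<^sup>2 / 2 = r * (r - b) + b\<^sup>2 / 2"
    by (simp add: power2_eq_square field_simps)
  moreover have "r * (r - b) \<le> s * \<bar>r - b\<bar>"
    using 3 by (intro mult_le_bound_mult_abs)
  ultimately show ?thesis by linarith
qed

lemma clip_huber_term_eq:
  assumes "s \<ge> 0"
  shows "s * \<bar>r - clip s r\<bar> + (clip s r)\<^sup>2 / 2 = clip s r * r - (clip s r)\<^sup>2 / 2"
  using assms by (cases rule: clip_cases[of s r]) (auto simp: power2_eq_square algebra_simps)

lemma huber_term_ge_dual_term:
  fixes s r b v :: real
  assumes "\<bar>v\<bar> \<le> s"
  shows "v * r - v\<^sup>2 / 2 \<le> s * \<bar>r - b\<bar> + b\<^sup>2 / 2"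
proof -
  have "v * (r - b) \<le> s * \<bar>r - b\<bar>"
    using assms by (rule mult_le_bound_mult_abs)
  moreover have "v * b - v\<^sup>2 / 2 \<le> b\<^sup>2 / 2"
    using sum_squares_ge_zero[of "v - b" 0] by (simp add: power2_eq_square algebra_simps)
  ultimately show ?thesis by (simp add: algebra_simps)
qed

lemma norm_cart_power2: "(norm (b :: real^'n))\<^sup>2 = (\<Sum>i\<in>UNIV. (b $ i)\<^sup>2)"
  unfolding power2_norm_eq_inner by (simp add: inner_vec_def power2_eq_square)

lemma inner_matrix_vector: "u \<bullet> (X *v g) = (transpose X *v u) \<bullet> (g :: real^'p)"
  for u :: "real^'n"
  by (simp add: dot_lmul_matrix)

lemma linf_norm_le_iff: "linf_norm (v :: real^'n) \<le> c \<longleftrightarrow> (\<forall>i. \<bar>v $ i\<bar> \<le> c)"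
  unfolding linf_norm_def by (subst Max_le_iff) auto

lemma psi_eq_sum:
  "psi s X y g b = (\<Sum>i\<in>UNIV. s * \<bar>(y - X *v g) $ i - b $ i\<bar> + (b $ i)\<^sup>2 / 2)"
  by (simp add: psi_def l1_norm_def norm_cart_power2 sum_distrib_left sum.distrib sum_divide_distrib)

lemma dual_obj_eq_sum:
  assumes "transpose X *v v = 0"
  shows "dual_obj y v = (\<Sum>i\<in>UNIV. v $ i * (y - X *v g) $ i - (v $ i)\<^sup>2 / 2)"
proof -
  have "v \<bullet> (X *v g) = 0"
    using assms by (simp only: inner_matrix_vector inner_zero_left)
  then have "dual_obj y v = v \<bullet> (y - X *v g) - (norm v)\<^sup>2 / 2"
    by (simp add: dual_obj_def inner_diff_right)
  then show ?thesis
    by (simp add: inner_vec_def norm_cart_power2 sum_subtractf sum_divide_distrib)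
qed

lemma psi_clip_vec_le:
  assumes "s \<ge> 0"
  shows "psi s X y g (clip_vec s (y - X *v g)) + (norm (b - clip_vec s (y - X *v g)))\<^sup>2 / 2
           \<le> psi s X y g b"
  unfolding psi_eq_sum norm_cart_power2 sum_divide_distrib sum.distrib[symmetric]
  by (rule sum_mono) (simp add: clip_vec_def clip_minimises_huber_term[OF assms])

lemma dual_obj_le_psi:
  assumes "transpose X *v v = 0" "\<forall>i. \<bar>v $ i\<bar> \<le> s"
  shows "dual_obj y v \<le> psi s X y g b"
  unfolding dual_obj_eq_sum[OF assms(1), of y g] psi_eq_sum
  using assms(2) by (intro sum_mono huber_term_ge_dual_term) auto

lemma psi_clip_vec_eq_dual_obj:
  assumes "s \<ge> 0" "transpose X *v clip_vec s (y - X *v g) = 0"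
  shows "psi s X y g (clip_vec s (y - X *v g)) = dual_obj y (clip_vec s (y - X *v g))"
  unfolding dual_obj_eq_sum[OF assms(2), of y g] psi_eq_sum
  by (rule sum.cong) (simp_all add: clip_vec_def clip_huber_term_eq[OF assms(1)])

lemma inner_eq_0_if_norm_minimal:
  fixes b v :: "'a :: real_inner"
  assumes "\<And>t. norm b \<le> norm (b - t *\<^sub>R v)"
  shows "b \<bullet> v = 0"
proof (cases "v = 0")
  case False
  define t where "t = (b \<bullet> v) / (v \<bullet> v)"
  have "(norm (b - t *\<^sub>R v))\<^sup>2 = (norm b)\<^sup>2 - (b \<bullet> v)\<^sup>2 / (v \<bullet> v)"
    unfolding power2_norm_eq_inner using False
    by (simp add: t_def inner_diff_left inner_diff_right inner_commute power2_eq_square field_simps)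
  moreover have "(norm b)\<^sup>2 \<le> (norm (b - t *\<^sub>R v))\<^sup>2"
    using assms[of t] by (simp add: power_mono)
  ultimately have "(b \<bullet> v)\<^sup>2 / (v \<bullet> v) \<le> 0" by linarith
  moreover have "v \<bullet> v > 0" using False by simp
  ultimately show ?thesis
    by (simp add: divide_le_0_iff)
qed simp

lemma minimiser_in_kernel:
  assumes min: "\<forall>g b. psi s X y gh bh \<le> psi s X y g b"
  shows "transpose X *v bh = 0"
proof -
  have "(transpose X *v bh) \<bullet> w = 0" for w
    unfolding inner_matrix_vector[symmetric]
  proof (rule inner_eq_0_if_norm_minimal)
    fix t
    have residual: "y - X *v (gh + t *\<^sub>R w) - (bh - t *\<^sub>R (X *v w)) = y - X *v gh - bh"
      by (simp add: matrix_vector_right_distrib matrix_vector_mult_scaleR)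
    have "psi s X y gh bh \<le> psi s X y (gh + t *\<^sub>R w) (bh - t *\<^sub>R (X *v w))"
      using min by blast
    then have "(norm bh)\<^sup>2 \<le> (norm (bh - t *\<^sub>R (X *v w)))\<^sup>2"
      unfolding psi_def residual by simp
    then show "norm bh \<le> norm (bh - t *\<^sub>R (X *v w))"
      by (rule power2_le_imp_le) simp
  qed
  then show ?thesis
    by (metis inner_eq_zero_iff)
qed

lemma psi_ge_l1_norm:
  assumes "s \<ge> 0"
  shows "s * l1_norm (y - X *v g) - real CARD('n) * s\<^sup>2 / 2 \<le> psi s X y g (b :: real^'n)"
proof -
  have "s * \<bar>r\<bar> - s\<^sup>2 / 2 \<le> s * \<bar>r - c\<bar> + c\<^sup>2 / 2" for r c :: real
    using huber_term_ge_dual_term[of "if r \<ge> 0 then s else - s" s r c] assms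
    by (cases "r \<ge> 0") (auto simp: power2_eq_square)
  then have "(\<Sum>i\<in>UNIV. s * \<bar>(y - X *v g) $ i\<bar> - s\<^sup>2 / 2) \<le> psi s X y g b"
    unfolding psi_eq_sum by (intro sum_mono)
  then show ?thesis
    by (simp add: sum_subtractf l1_norm_def sum_distrib_left)
qed

lemma continuous_attains_global_min_if_coercive:
  fixes f :: "'a :: {real_normed_vector, heine_borel} \<Rightarrow> real"
  assumes "continuous_on UNIV f" "c > 0" "\<And>x. c * norm x - d \<le> f x"
  obtains x0 where "\<And>x. f x0 \<le> f x"
proof -
  define R where "R = (f 0 + d) / c"
  have "R \<ge> 0"
    using assms(2) assms(3)[of 0] by (simp add: R_def)
  then obtain x0 where x0: "x0 \<in> cball 0 R" "\<And>x. x \<in> cball 0 R \<Longrightarrow> f x0 \<le> f x"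
    using continuous_attains_inf[OF compact_cball, of 0 R f] continuous_on_subset[OF assms(1)]
    by auto
  have "f x0 \<le> f x" for x
  proof (cases "x \<in> cball 0 R")
    case False
    then have "f 0 + d < c * norm x"
      using assms(2) by (simp add: R_def pos_le_divide_eq mult.commute)
    then have "f 0 < f x"
      using assms(3)[of x] by linarith
    moreover have "f x0 \<le> f 0"
      using x0(2) \<open>R \<ge> 0\<close> by simp
    ultimately show ?thesis by simp
  qed (use x0 in blast)
  then show thesis by (rule that)
qed

lemma psi_has_minimiser:
  fixes X :: "real^'p^'n"
  assumes "inj ((*v) X)" "s > 0"
  obtains gh where "\<And>g b. psi s X y gh (clip_vec s (y - X *v gh)) \<le> psi s X y g b"
proof -
  define H where "H g = psi s X y g (clip_vec s (y - X *v g))" for g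
  obtain B where B: "B > 0" "\<And>x. B * norm x \<le> norm (X *v x)"
    using linear_inj_bounded_below_pos[of "(*v) X"] assms(1) matrix_vector_mul_linear by blast
  have "continuous_on UNIV H"
    unfolding H_def psi_def l1_norm_def clip_vec_def clip_eq_max_min[OF less_imp_le[OF assms(2)]]
    by (intro continuous_intros linear_continuous_on matrix_vector_mul_bounded_linear)
  moreover have "(s * B) * norm g - (s * norm y + real CARD('n) * s\<^sup>2 / 2) \<le> H g" for g
  proof -
    have "B * norm g - norm y \<le> norm (y - X *v g)"
      using B(2)[of g] norm_triangle_ineq2[of "X *v g" y] by (simp add: norm_minus_commute)
    also have "\<dots> \<le> l1_norm (y - X *v g)"
      unfolding l1_norm_def by (rule norm_le_l1_cart)
    finally have "s * (B * norm g - norm y) \<le> s * l1_norm (y - X *v g)"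
      using assms(2) by (simp add: mult_left_mono)
    then show ?thesis
      using psi_ge_l1_norm[of s y X g "clip_vec s (y - X *v g)"] assms(2)
      unfolding H_def by (simp add: algebra_simps)
  qed
  ultimately obtain gh where gh: "\<And>g. H gh \<le> H g"
    using continuous_attains_global_min_if_coercive[of H "s * B"] assms(2) B(1) by auto
  show thesis
  proof (rule that)
    fix g b
    have "H g \<le> psi s X y g b"
      using psi_clip_vec_le[of s X y g b] assms(2) zero_le_power2[of "norm (b - clip_vec s (y - X *v g))"]
      unfolding H_def by linarith
    then show "psi s X y gh (clip_vec s (y - X *v gh)) \<le> psi s X y g b"
      using gh[of g] unfolding H_def by linarith
  qed
qed

lemma psi_minimiser_iff:
  assumes "s \<ge> 0"
  shows "(\<forall>g b. psi s X y gh bh \<le> psi s X y g b) \<longleftrightarrow>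
           transpose X *v bh = 0 \<and> bh = clip_vec s (y - X *v gh)"
proof
  assume min: "\<forall>g b. psi s X y gh bh \<le> psi s X y g b"
  then have "psi s X y gh bh \<le> psi s X y gh (clip_vec s (y - X *v gh))"
    by blast
  then have "(norm (bh - clip_vec s (y - X *v gh)))\<^sup>2 \<le> 0"
    using psi_clip_vec_le[OF assms, of X y gh bh] by linarith
  then show "transpose X *v bh = 0 \<and> bh = clip_vec s (y - X *v gh)"
    using minimiser_in_kernel[OF min] by simp
next
  assume bh: "transpose X *v bh = 0 \<and> bh = clip_vec s (y - X *v gh)"
  show "\<forall>g b. psi s X y gh bh \<le> psi s X y g b"
  proof (intro allI)
    fix g b
    have "psi s X y gh bh = dual_obj y bh"
      using bh psi_clip_vec_eq_dual_obj[OF assms] by blast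
    also have "\<dots> \<le> psi s X y g b"
      using bh abs_clip_le[OF assms] by (intro dual_obj_le_psi[OF conjunct1[OF bh]]) (simp add: clip_vec_def)
    finally show "psi s X y gh bh \<le> psi s X y g b" .
  qed
qed

lemma scaled_Pstar_iff:
  assumes "s > 0"
  shows "u \<in> (\<lambda>v. s *\<^sub>R v) ` Pstar X \<longleftrightarrow> transpose X *v u = 0 \<and> (\<forall>i. \<bar>u $ i\<bar> \<le> s)"
proof -
  have "u \<in> (\<lambda>v. s *\<^sub>R v) ` Pstar X \<longleftrightarrow> (1 / s) *\<^sub>R u \<in> Pstar X"
    using assms by (auto simp: image_iff intro!: bexI[of _ "(1 / s) *\<^sub>R u"])
  also have "\<dots> \<longleftrightarrow> transpose X *v u = 0 \<and> (\<forall>i. \<bar>u $ i\<bar> \<le> s)"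
    using assms by (simp add: Pstar_def linf_norm_le_iff scaleR_vector_matrix_assoc abs_mult
        divide_le_eq_1)
  finally show ?thesis .
qed

lemma dual_obj_le_lagrangian:
  assumes "transpose X *v u = 0" "\<forall>i. \<bar>u $ i\<bar> \<le> s"
  shows "dual_obj y u \<le> lagrangian s X y g b r u"
proof -
  have "u \<bullet> (X *v g) = 0"
    using assms(1) by (simp only: inner_matrix_vector inner_zero_left)
  moreover have "u \<bullet> r \<le> s * l1_norm r"
    unfolding inner_vec_def inner_real_def l1_norm_def sum_distrib_left
    using assms(2) by (intro sum_mono mult_le_bound_mult_abs) simp
  moreover have "u \<bullet> b \<le> (norm b)\<^sup>2 / 2 + (norm u)\<^sup>2 / 2"
    using inner_ge_zero[of "b - u"] unfolding power2_norm_eq_inner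
    by (simp add: inner_diff_left inner_diff_right inner_commute)
  ultimately show ?thesis
    by (simp add: lagrangian_def dual_obj_def inner_diff_right)
qed

lemma lagrangian_attains_dual_obj: "lagrangian s X y 0 u 0 u = dual_obj y u"
  by (simp add: lagrangian_def dual_obj_def l1_norm_def inner_diff_right power2_norm_eq_inner)

lemma lagrangian_unbounded_below_if_not_kernel:
  assumes "transpose X *v u \<noteq> 0"
  shows "\<exists>g. lagrangian s X y g 0 0 u < M"
proof -
  define w where "w = transpose X *v u"
  define t where "t = (\<bar>u \<bullet> y\<bar> + \<bar>M\<bar> + 1) / (w \<bullet> w)"
  have "w \<bullet> w > 0"
    using assms by (simp add: w_def)
  then have "t * (w \<bullet> w) = \<bar>u \<bullet> y\<bar> + \<bar>M\<bar> + 1"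
    by (simp add: t_def)
  moreover have "lagrangian s X y (t *\<^sub>R w) 0 0 u = u \<bullet> y - t * (w \<bullet> w)"
    by (simp add: lagrangian_def l1_norm_def inner_diff_right matrix_vector_mult_scaleR
        inner_matrix_vector w_def)
  ultimately show ?thesis
    by (intro exI[of _ "t *\<^sub>R w"]) linarith
qed

lemma l1_norm_axis: "l1_norm (axis i c) = \<bar>c\<bar>"
  unfolding l1_norm_def by (simp add: axis_def if_distrib[of abs] cong: if_cong)

lemma lagrangian_unbounded_below_if_large_entry:
  assumes "s \<ge> 0" "\<bar>u $ i\<bar> > s"
  shows "\<exists>r. lagrangian s X y 0 0 r u < M"
proof -
  define t where "t = (\<bar>u \<bullet> y\<bar> + \<bar>M\<bar> + 1) / (\<bar>u $ i\<bar> - s)"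
  define c where "c = (if u $ i \<ge> 0 then t else - t)"
  have t: "t * (\<bar>u $ i\<bar> - s) = \<bar>u \<bullet> y\<bar> + \<bar>M\<bar> + 1" "t \<ge> 0"
    using assms(2) by (simp_all add: t_def)
  have "lagrangian s X y 0 0 (axis i c) u = s * \<bar>c\<bar> + u \<bullet> y - u $ i * c"
    by (simp add: lagrangian_def l1_norm_axis inner_diff_right inner_axis)
  also have "\<dots> = u \<bullet> y - t * (\<bar>u $ i\<bar> - s)"
    using t(2) by (auto simp: c_def algebra_simps)
  finally show ?thesis
    using t(1) by (intro exI[of _ "axis i c"]) linarith
qed

lemma INF_ereal_eq_minf_if_unbounded:
  assumes "\<And>M. \<exists>x\<in>A. f x < M"
  shows "(INF x\<in>A. ereal (f x)) = - \<infinity>"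
proof (rule ccontr)
  assume "(INF x\<in>A. ereal (f x)) \<noteq> - \<infinity>"
  then obtain c where c: "c > - \<infinity>" "\<forall>x\<in>A. c \<le> ereal (f x)"
    unfolding INF_eq_minf by auto
  then obtain m where "c = ereal m \<or> c = \<infinity>"
    by (cases c) auto
  moreover obtain x where "x \<in> A" "f x < m"
    using assms by blast
  ultimately show False
    using c(2) by auto
qed

lemma lagrange_dual_eq:
  assumes "s > 0"
  shows "lagrange_dual s X y u =
           (if transpose X *v u = 0 \<and> (\<forall>i. \<bar>u $ i\<bar> \<le> s) then ereal (dual_obj y u) else - \<infinity>)"
proof (cases "transpose X *v u = 0 \<and> (\<forall>i. \<bar>u $ i\<bar> \<le> s)")
  case True
  then have "lagrange_dual s X y u = ereal (dual_obj y u)"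
    unfolding lagrange_dual_def
    by (intro antisym INF_greatest INF_lower2[of "(0, u, 0)"])
       (auto simp: lagrangian_attains_dual_obj dual_obj_le_lagrangian)
  with True show ?thesis by simp
next
  case False
  have "\<exists>gbr\<in>UNIV. (case gbr of (g, b, r) \<Rightarrow> lagrangian s X y g b r u) < M" for M
  proof (cases "transpose X *v u = 0")
    case True
    with False obtain i where "\<bar>u $ i\<bar> > s"
      by (auto simp: not_le)
    then obtain r where "lagrangian s X y 0 0 r u < M"
      using lagrangian_unbounded_below_if_large_entry[OF less_imp_le[OF assms]] by blast
    then show ?thesis
      by (intro bexI[of _ "(0, 0, r)"]) auto
  next
    case False
    then obtain g where "lagrangian s X y g 0 0 u < M"
      using lagrangian_unbounded_below_if_not_kernel by blast
    then show ?thesis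
      by (intro bexI[of _ "(g, 0, 0)"]) auto
  qed
  with False show ?thesis
    unfolding lagrange_dual_def by (simp add: INF_ereal_eq_minf_if_unbounded)
qed

theorem lemma4p3:
  fixes X :: "real^'p^'n" and y :: "real^'n" and \<sigma> :: real
  assumes "CARD('p) < CARD('n)"
    and "rank X = CARD('p)"
    and "\<sigma> > 0"
  shows "(\<forall>gh bh. (\<forall>g b. psi \<sigma> X y gh bh \<le> psi \<sigma> X y g b) \<longleftrightarrow>
            (transpose X *v bh = 0 \<and>
             (\<forall>i. bh $ i = (if y $ i - (X *v gh) $ i > \<sigma> then \<sigma>
                            else if y $ i - (X *v gh) $ i < - \<sigma> then - \<sigma>
                            else y $ i - (X *v gh) $ i))))
    \<and> (\<forall>gh bh. (\<forall>g b. psi \<sigma> X y gh bh \<le> psi \<sigma> X y g b) \<longrightarrow> linf_norm bh \<le> \<sigma>)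
    \<and> (\<forall>u. lagrange_dual \<sigma> X y u =
            (if u \<in> (\<lambda>v. \<sigma> *\<^sub>R v) ` Pstar X then ereal (dual_obj y u) else - \<infinity>))
    \<and> (\<exists>gh bh u. (\<forall>g b. psi \<sigma> X y gh bh \<le> psi \<sigma> X y g b)
            \<and> u \<in> (\<lambda>v. \<sigma> *\<^sub>R v) ` Pstar X
            \<and> (\<forall>v \<in> (\<lambda>v. \<sigma> *\<^sub>R v) ` Pstar X. dual_obj y v \<le> dual_obj y u)
            \<and> psi \<sigma> X y gh bh = dual_obj y u)"
proof -
  have \<sigma>: "\<sigma> \<ge> 0" using assms(3) by simp
  let ?sP = "(\<lambda>v. \<sigma> *\<^sub>R v) ` Pstar X"
  have clip_vec_iff: "b = clip_vec \<sigma> (y - X *v g) \<longleftrightarrow>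
      (\<forall>i. b $ i = (if y $ i - (X *v g) $ i > \<sigma> then \<sigma>
                    else if y $ i - (X *v g) $ i < - \<sigma> then - \<sigma> else y $ i - (X *v g) $ i))"
    for g b by (simp add: vec_eq_iff clip_vec_def clip_def)
  have clip_vec_bounded: "\<forall>i. \<bar>clip_vec \<sigma> r $ i\<bar> \<le> \<sigma>" for r :: "real^'n"
    using abs_clip_le[OF \<sigma>] by (simp add: clip_vec_def)
  obtain g0 where g0: "\<And>g b. psi \<sigma> X y g0 (clip_vec \<sigma> (y - X *v g0)) \<le> psi \<sigma> X y g b"
    using psi_has_minimiser[where y = y, OF full_rank_injective[THEN iffD1, OF assms(2)] assms(3)]
    by blast
  define b0 where "b0 = clip_vec \<sigma> (y - X *v g0)"
  have minimiser: "\<forall>g b. psi \<sigma> X y g0 b0 \<le> psi \<sigma> X y g b"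
    using g0 by (simp add: b0_def)
  have b0_in_kernel: "transpose X *v b0 = 0"
    using minimiser by (rule minimiser_in_kernel)
  show ?thesis
    unfolding clip_vec_iff[symmetric]
  proof (intro conjI allI impI exI ballI)
    show "(\<forall>g b. psi \<sigma> X y gh bh \<le> psi \<sigma> X y g b) \<longleftrightarrow>
        transpose X *v bh = 0 \<and> bh = clip_vec \<sigma> (y - X *v gh)" for gh bh
      by (rule psi_minimiser_iff[OF \<sigma>])
    show "linf_norm bh \<le> \<sigma>" if "\<forall>g b. psi \<sigma> X y gh bh \<le> psi \<sigma> X y g b" for gh bh
      using that clip_vec_bounded by (simp add: psi_minimiser_iff[OF \<sigma>] linf_norm_le_iff)
    show "lagrange_dual \<sigma> X y u = (if u \<in> ?sP then ereal (dual_obj y u) else - \<infinity>)" for u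
      by (simp add: lagrange_dual_eq[OF assms(3)] scaled_Pstar_iff[OF assms(3)])
    show "psi \<sigma> X y g0 b0 \<le> psi \<sigma> X y g b" for g b
      using minimiser by blast
    show "b0 \<in> ?sP"
      using b0_in_kernel clip_vec_bounded by (simp add: scaled_Pstar_iff[OF assms(3)] b0_def)
    show "psi \<sigma> X y g0 b0 = dual_obj y b0"
      using psi_clip_vec_eq_dual_obj[OF \<sigma>] b0_in_kernel by (simp add: b0_def)
    then show "dual_obj y v \<le> dual_obj y b0" if "v \<in> ?sP" for v
      using that dual_obj_le_psi[of X v \<sigma> y g0 b0] by (simp add: scaled_Pstar_iff[OF assms(3)])
  qed
qed

end
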